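(* Let $\mathrm{S}$ be a semicopula such that for each $a\in(0,1)$ the interval $[0,1]$ is the union of countably many closed intervals on each of which the function $x\mapsto\mathrm{S}(a,x)$ is either constant or strictly increasing. Then the following are equivalent: (i) for every measurable space $(X,\mathcal{A})$, every capacity $\mu$ on $\mathcal{A}$, every $\mathcal{A}$-measurable $f\colon X\to[0,1]$ and every $a\in[0,1]$, $$\mathbf{I}_{\mathrm{S}}\big(\mu,\mathrm{S}(a,f)\big)=\mathrm{S}\big(a,\mathbf{I}_{\mathrm{S}}(\mu,f)\big),$$ where $\mathrm{S}(a,f)$ denotes the function $x\mapsto\mathrm{S}(a,f(x))$; (ii) $\mathrm{S}$ is associative (i.e. $\mathrm{S}(\mathrm{S}(x,y),z)=\mathrm{S}(x,\mathrm{S}(y,z))$ for all $x,y,z\in[0,1]$) and for each $a\in(0,1)$ the function $[0,1]\ni x\mapsto\mathrm{S}(a,x)$ is continuous.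
   Context: A semicopula is a function $\mathrm{S}\colon[0,1]^2\to[0,1]$ that is non-decreasing in each coordinate and has neutral element $1$, i.e. $\mathrm{S}(x,1)=\mathrm{S}(1,x)=x$ for all $x\in[0,1]$. For a measurable space $(X,\mathcal{A})$ (with $X$ nonempty and $\mathcal{A}$ a $\sigma$-algebra), a capacity on $\mathcal{A}$ is a non-decreasing set function $\mu\colon\mathcal{A}\to[0,1]$ with $\mu(\emptyset)=0$ and $\mu(X)=1$. For a capacity $\mu$ and an $\mathcal{A}$-measurable $f\colon X\to[0,1]$, the generalized Sugeno integral is $$\mathbf{I}_{\mathrm{S}}(\mu,f)=\sup_{t\in[0,1]}\mathrm{S}\big(t,\mu(\{x\in X: f(x)\ge t\})\big).$$ *)

theory Defs
  imports "HOL-Analysis.Analysis"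
begin

definition semicopula :: "(real \<Rightarrow> real \<Rightarrow> real) \<Rightarrow> bool" where
  "semicopula S \<longleftrightarrow>
     (\<forall>x\<in>{0..1}. \<forall>y\<in>{0..1}. S x y \<in> {0..1}) \<and>
     (\<forall>x\<in>{0..1}. \<forall>x'\<in>{0..1}. \<forall>y\<in>{0..1}. x \<le> x' \<longrightarrow> S x y \<le> S x' y) \<and>
     (\<forall>x\<in>{0..1}. \<forall>y\<in>{0..1}. \<forall>y'\<in>{0..1}. y \<le> y' \<longrightarrow> S x y \<le> S x y') \<and>
     (\<forall>x\<in>{0..1}. S x 1 = x \<and> S 1 x = x)"

definition capacity :: "'a measure \<Rightarrow> ('a set \<Rightarrow> real) \<Rightarrow> bool" where
  "capacity M \<mu> \<longleftrightarrow>
     (\<forall>A\<in>sets M. \<forall>B\<in>sets M. A \<subseteq> B \<longrightarrow> \<mu> A \<le> \<mu> B) \<and>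
     (\<forall>A\<in>sets M. \<mu> A \<in> {0..1}) \<and>
     \<mu> {} = 0 \<and> \<mu> (space M) = 1"

definition sugeno :: "(real \<Rightarrow> real \<Rightarrow> real) \<Rightarrow> 'a measure \<Rightarrow> ('a set \<Rightarrow> real) \<Rightarrow> ('a \<Rightarrow> real) \<Rightarrow> real" where
  "sugeno S M \<mu> f = (SUP t\<in>{0..1}. S t (\<mu> {x\<in>space M. f x \<ge> t}))"

text \<open>Property (i) restricted to a single measurable space M.\<close>
definition sugeno_homogeneous_on :: "(real \<Rightarrow> real \<Rightarrow> real) \<Rightarrow> 'a measure \<Rightarrow> bool" where
  "sugeno_homogeneous_on S M \<longleftrightarrow>
     (\<forall>\<mu> f a. capacity M \<mu> \<and> f \<in> borel_measurable M \<and> (\<forall>x\<in>space M. f x \<in> {0..1}) \<and> a \<in> {0..1}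
        \<longrightarrow> sugeno S M \<mu> (\<lambda>x. S a (f x)) = S a (sugeno S M \<mu> f))"

definition piecewise_const_or_strict :: "(real \<Rightarrow> real) \<Rightarrow> bool" where
  "piecewise_const_or_strict g \<longleftrightarrow>
     (\<exists>l u :: nat \<Rightarrow> real.
        (\<forall>n. 0 \<le> l n \<and> l n \<le> u n \<and> u n \<le> 1) \<and>
        (\<Union>n. {l n..u n}) = {0..1} \<and>
        (\<forall>n. (\<forall>x\<in>{l n..u n}. \<forall>y\<in>{l n..u n}. g x = g y) \<or> strict_mono_on {l n..u n} g))"

end

theory Submission
  imports Defs
begin

text \<open>
  (i) \<Longrightarrow> (ii): two kinds of capacities on the reals test homogeneity. For the capacity that is
  \<open>1\<close> on the whole line, \<open>z\<close> on the other sets containing \<open>1\<close> and \<open>0\<close> elsewhere, the Sugeno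
  integral of \<open>d\<close> times the indicator of \<open>{1}\<close> is \<open>S(d, z)\<close>, so homogeneity on these functions is
  associativity. For a \<open>{0,1}\<close>-valued capacity given by the sets that hold eventually along a filter,
  the integral is a lower limit along the filter; using the filters just left and just right of the
  point where \<open>S(a, \<cdot>)\<close> would jump over a value shows that \<open>S(a, \<cdot>)\<close> attains all of \<open>[0, a]\<close>,
  hence is continuous, being monotone.

  (ii) \<Longrightarrow> (i): for continuous monotone \<open>g = S(a, \<cdot>)\<close>, every level set \<open>{s \<le> g \<circ> f}\<close> with
  \<open>0 < s \<le> a\<close> is a level set \<open>{t \<le> f}\<close> with \<open>g t = s\<close>, and associativity turns \<open>S(g t, \<mu>)\<close>
  into \<open>g (S(t, \<mu>))\<close>; continuity lets \<open>g\<close> commute with the supremum.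

  Neither direction needs the hypothesis that each \<open>S(a, \<cdot>)\<close> is piecewise constant or strictly
  increasing.
\<close>

lemma semicopula_range:
  "semicopula S \<Longrightarrow> x \<in> {0..1} \<Longrightarrow> y \<in> {0..1} \<Longrightarrow> S x y \<in> {0..1}"
  unfolding semicopula_def by auto

lemma semicopula_mono_left:
  "semicopula S \<Longrightarrow> x \<in> {0..1} \<Longrightarrow> x' \<in> {0..1} \<Longrightarrow> y \<in> {0..1} \<Longrightarrow> x \<le> x' \<Longrightarrow> S x y \<le> S x' y"
  unfolding semicopula_def by auto

lemma semicopula_mono_right:
  "semicopula S \<Longrightarrow> x \<in> {0..1} \<Longrightarrow> y \<in> {0..1} \<Longrightarrow> y' \<in> {0..1} \<Longrightarrow> y \<le> y' \<Longrightarrow> S x y \<le> S x y'"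
  unfolding semicopula_def by auto

lemma semicopula_mono_on: "semicopula S \<Longrightarrow> x \<in> {0..1} \<Longrightarrow> mono_on {0..1} (S x)"
  by (intro mono_onI) (rule semicopula_mono_right)

lemma semicopula_one_right: "semicopula S \<Longrightarrow> x \<in> {0..1} \<Longrightarrow> S x 1 = x"
  unfolding semicopula_def by auto

lemma semicopula_one_left: "semicopula S \<Longrightarrow> y \<in> {0..1} \<Longrightarrow> S 1 y = y"
  unfolding semicopula_def by auto

lemma semicopula_zero_left:
  assumes "semicopula S" "y \<in> {0..1}"
  shows "S 0 y = 0"
  using semicopula_mono_right[OF assms(1), of 0 y 1] semicopula_one_right[OF assms(1), of 0]
    semicopula_range[OF assms(1), of 0 y] assms(2) by auto

lemma semicopula_zero_right:
  assumes "semicopula S" "x \<in> {0..1}"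
  shows "S x 0 = 0"
  using semicopula_mono_left[OF assms(1), of x 1 0] semicopula_one_left[OF assms(1), of 0]
    semicopula_range[OF assms(1), of x 0] assms(2) by auto

lemma semicopula_le_left:
  assumes "semicopula S" "x \<in> {0..1}" "y \<in> {0..1}"
  shows "S x y \<le> x"
  using semicopula_mono_right[OF assms(1,2,3), of 1] semicopula_one_right[OF assms(1,2)] assms(3)
  by auto

lemma semicopula_continuous_on:
  assumes S: "semicopula S" and cont: "\<forall>a\<in>{0<..<1}. continuous_on {0..1} (S a)"
    and a: "a \<in> {0..1}"
  shows "continuous_on {0..1} (S a)"
proof -
  consider "a = 0" | "a = 1" | "a \<in> {0<..<1}"
    using a by fastforce
  then show ?thesis
  proof cases
    case 1
    have "continuous_on {0..1} (\<lambda>x::real. 0::real)"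
      by simp
    then show ?thesis
      by (rule continuous_on_cong[THEN iffD1, rotated 2]) (use 1 semicopula_zero_left[OF S] in auto)
  next
    case 2
    have "continuous_on {0..1} (\<lambda>x::real. x)"
      by simp
    then show ?thesis
      by (rule continuous_on_cong[THEN iffD1, rotated 2]) (use 2 semicopula_one_left[OF S] in auto)
  qed (use cont in auto)
qed

lemma capacity_range: "capacity M \<mu> \<Longrightarrow> A \<in> sets M \<Longrightarrow> \<mu> A \<in> {0..1}"
  unfolding capacity_def by auto

lemma capacity_mono:
  "capacity M \<mu> \<Longrightarrow> A \<in> sets M \<Longrightarrow> B \<in> sets M \<Longrightarrow> A \<subseteq> B \<Longrightarrow> \<mu> A \<le> \<mu> B"
  unfolding capacity_def by auto

lemma mono_on_onto_imp_continuous_on: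
  fixes g :: "real \<Rightarrow> real"
  assumes "a \<le> b" and mono: "mono_on {a..b} g" and onto: "{g a..g b} \<subseteq> g ` {a..b}"
  shows "continuous_on {a..b} g"
proof -
  \<comment> \<open>extended with slope \<open>1\<close> outside \<open>[a, b]\<close>, \<open>g\<close> becomes monotone and onto \<open>\<real>\<close>\<close>
  define G where "G x = (if x < a then g a + (x - a) else if b < x then g b + (x - b) else g x)" for x
  have "continuous_on UNIV G"
  proof (rule continuous_onI_mono)
    have "g a \<le> g b"
      using mono_onD[OF mono] \<open>a \<le> b\<close> by auto
    have "y \<in> range G" for y
    proof -
      consider "y < g a" | "g b < y" | "y \<in> {g a..g b}"
        by fastforce
      then show ?thesis
      proof cases
        case 1
        then show ?thesis by (intro image_eqI[of _ _ "y - g a + a"]) (auto simp: G_def)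
      next
        case 2
        then show ?thesis
          using \<open>g a \<le> g b\<close> \<open>a \<le> b\<close> by (intro image_eqI[of _ _ "y - g b + b"]) (auto simp: G_def)
      next
        case 3
        then obtain x where "x \<in> {a..b}" "y = g x"
          using onto by auto
        then show ?thesis by (intro image_eqI[of _ _ x]) (auto simp: G_def)
      qed
    qed
    then show "open (range G)"
      by (metis UNIV_eq_I open_UNIV)
  next
    fix x y :: real
    assume "x \<le> y"
    have bounds: "g a \<le> g z \<and> g z \<le> g b" if "z \<in> {a..b}" for z
      using mono_onD[OF mono] that by auto
    show "G x \<le> G y"
      using \<open>x \<le> y\<close> mono_onD[OF mono, of x y] \<open>a \<le> b\<close> bounds[of x] bounds[of y] bounds[of b]
      by (auto simp: G_def)
  qed
  then have "continuous_on {a..b} G"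
    by (rule continuous_on_subset) simp
  then show ?thesis
    by (rule continuous_on_cong[THEN iffD1, rotated 2]) (auto simp: G_def)
qed

lemma continuous_mono_on_Sup:
  fixes g :: "real \<Rightarrow> real"
  assumes cont: "continuous_on {a..b} g" and mono: "mono_on {a..b} g"
    and A: "A \<subseteq> {a..b}" "A \<noteq> {}"
  shows "g (Sup A) = Sup (g ` A)"
proof (rule antisym)
  have bdd: "bdd_above A"
    using A(1) by (meson bdd_above_Icc bdd_above_mono)
  have cl: "closure A \<subseteq> {a..b}"
    using A closure_minimal by blast
  have "Sup A \<in> closure A"
    using closure_contains_Sup[OF A(2) bdd] .
  moreover have "g x \<le> Sup (g ` A)" if "x \<in> A" for x
    using that A by (intro cSUP_upper bdd_aboveI2[where M="g b"] mono_onD[OF mono]) auto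
  then have "g ` closure A \<subseteq> {..Sup (g ` A)}"
    using cl by (intro image_closure_subset continuous_on_subset[OF cont]) auto
  ultimately show "g (Sup A) \<le> Sup (g ` A)"
    by auto
  have "Sup A \<in> {a..b}"
    using \<open>Sup A \<in> closure A\<close> cl by auto
  then show "Sup (g ` A) \<le> g (Sup A)"
    using A bdd by (intro cSUP_least mono_onD[OF mono] cSup_upper) auto
qed

lemma continuous_mono_on_level_set:
  fixes g :: "real \<Rightarrow> real"
  assumes "a \<le> b" and cont: "continuous_on {a..b} g" and mono: "mono_on {a..b} g"
    and s: "s \<in> {g a..g b}"
  obtains t where "t \<in> {a..b}" "g t = s" "\<And>x. x \<in> {a..b} \<Longrightarrow> s \<le> g x \<longleftrightarrow> t \<le> x"
proof -
  define T where "T = {a..b} \<inter> g -` {s..}"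
  have "closed T"
    unfolding T_def by (rule continuous_closed_preimage[OF cont]) auto
  moreover have "b \<in> T"
    using s \<open>a \<le> b\<close> by (auto simp: T_def)
  moreover have bdd: "bdd_below T"
    by (auto simp: T_def intro!: bdd_belowI2[where m=a])
  ultimately have "Inf T \<in> T"
    using closed_contains_Inf by blast
  then have t: "Inf T \<in> {a..b}" "s \<le> g (Inf T)"
    by (auto simp: T_def)
  have level: "s \<le> g x \<longleftrightarrow> Inf T \<le> x" if "x \<in> {a..b}" for x
    using that t mono_onD[OF mono, of "Inf T" x] cInf_lower[OF _ bdd, of x]
    by (auto simp: T_def)
  obtain t0 where "t0 \<in> {a..b}" "g t0 = s"
    using IVT'[of g a s b] cont s \<open>a \<le> b\<close> by auto
  then have "Inf T \<le> t0"
    using level[of t0] by simp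
  then have "g (Inf T) \<le> s"
    using mono_onD[OF mono, of "Inf T" t0] t \<open>t0 \<in> {a..b}\<close> \<open>g t0 = s\<close> by simp
  then show ?thesis
    using that t level by auto
qed

lemma level_set_measurable:
  fixes f :: "'a \<Rightarrow> real"
  assumes "f \<in> borel_measurable M"
  shows "{x \<in> space M. t \<le> f x} \<in> sets M"
  using measurable_sets[OF assms borel_closed[OF closed_atLeast]]
  by (simp add: vimage_def Int_def conj_commute)

lemma sugeno_upper:
  assumes S: "semicopula S" and cap: "capacity M \<mu>" and f: "f \<in> borel_measurable M"
    and t: "t \<in> {0..1}"
  shows "S t (\<mu> {x \<in> space M. t \<le> f x}) \<le> sugeno S M \<mu> f"
  unfolding sugeno_def
proof (rule cSUP_upper[OF t])
  show "bdd_above ((\<lambda>t. S t (\<mu> {x \<in> space M. t \<le> f x})) ` {0..1})"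
    using semicopula_range[OF S _ capacity_range[OF cap level_set_measurable[OF f]]]
    by (intro bdd_aboveI2[where M=1]) auto
qed

lemma sugeno_least:
  "(\<And>t. t \<in> {0..1} \<Longrightarrow> S t (\<mu> {x \<in> space M. t \<le> f x}) \<le> c) \<Longrightarrow> sugeno S M \<mu> f \<le> c"
  unfolding sugeno_def by (rule cSUP_least) auto

lemma sugeno_range:
  assumes S: "semicopula S" and cap: "capacity M \<mu>" and f: "f \<in> borel_measurable M"
  shows "sugeno S M \<mu> f \<in> {0..1}"
proof -
  have "0 \<le> sugeno S M \<mu> f"
    using sugeno_upper[OF S cap f, of 0] semicopula_zero_left[OF S capacity_range[OF cap]]
      level_set_measurable[OF f] by simp
  moreover have "sugeno S M \<mu> f \<le> 1"
    using semicopula_range[OF S _ capacity_range[OF cap level_set_measurable[OF f]]]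
    by (intro sugeno_least) auto
  ultimately show ?thesis
    by simp
qed

section \<open>Associativity and continuity imply homogeneity\<close>

context
  fixes S :: "real \<Rightarrow> real \<Rightarrow> real" and M :: "'a measure" and \<mu> and f :: "'a \<Rightarrow> real" and a :: real
  assumes S: "semicopula S"
    and assoc: "\<forall>x\<in>{0..1}. \<forall>y\<in>{0..1}. \<forall>z\<in>{0..1}. S (S x y) z = S x (S y z)"
    and cont: "continuous_on {0..1} (S a)"
    and cap: "capacity M \<mu>" and f: "f \<in> borel_measurable M"
    and f_range: "\<And>x. x \<in> space M \<Longrightarrow> f x \<in> {0..1}"
    and a: "a \<in> {0..1}"
begin

lemma level_set_semicopula_comp:
  assumes "s \<in> {0<..a}"
  obtains t where "t \<in> {0..1}" "S a t = s"
    "{x \<in> space M. s \<le> S a (f x)} = {x \<in> space M. t \<le> f x}"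
    "\<And>x. x \<in> {0..1} \<Longrightarrow> s \<le> S a x \<Longrightarrow> t \<le> x"
proof -
  have "s \<in> {S a 0..S a 1}"
    using assms semicopula_zero_right[OF S a] semicopula_one_right[OF S a] by simp
  then obtain t where t: "t \<in> {0..1}" "S a t = s" "\<And>x. x \<in> {0..1} \<Longrightarrow> s \<le> S a x \<longleftrightarrow> t \<le> x"
    using continuous_mono_on_level_set[OF _ cont semicopula_mono_on[OF S a]] by auto
  then have "{x \<in> space M. s \<le> S a (f x)} = {x \<in> space M. t \<le> f x}"
    using f_range by auto
  with t that show ?thesis
    by blast
qed

lemma semicopula_comp_measurable: "(\<lambda>x. S a (f x)) \<in> borel_measurable M"
  unfolding borel_measurable_iff_ge
proof
  fix s :: real
  have range: "0 \<le> S a (f x) \<and> S a (f x) \<le> a" if "x \<in> space M" for x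
    using semicopula_range[OF S a f_range[OF that]] semicopula_le_left[OF S a f_range[OF that]]
    by simp
  consider "s \<le> 0" | "a < s" | "s \<in> {0<..a}"
    by fastforce
  then show "{x \<in> space M. s \<le> S a (f x)} \<in> sets M"
  proof cases
    case 1
    then have "{x \<in> space M. s \<le> S a (f x)} = space M"
      using range by force
    then show ?thesis
      by simp
  next
    case 2
    then have empty: "{x \<in> space M. s \<le> S a (f x)} = {}"
      using range by force
    show ?thesis
      unfolding empty by simp
  next
    case 3
    then obtain t where "{x \<in> space M. s \<le> S a (f x)} = {x \<in> space M. t \<le> f x}"
      by (elim level_set_semicopula_comp)
    then show ?thesis
      using level_set_measurable[OF f] by simp
  qed
qed

lemma sugeno_semicopula_comp_le: "sugeno S M \<mu> (\<lambda>x. S a (f x)) \<le> S a (sugeno S M \<mu> f)"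
proof (rule sugeno_least)
  fix s :: real
  assume s: "s \<in> {0..1}"
  let ?A = "{x \<in> space M. s \<le> S a (f x)}"
  have I: "sugeno S M \<mu> f \<in> {0..1}"
    using sugeno_range[OF S cap f] .
  have I_pos: "0 \<le> S a (sugeno S M \<mu> f)"
    using semicopula_range[OF S a I] by simp
  consider "s = 0" | "a < s" | "s \<in> {0<..a}"
    using s by fastforce
  then show "S s (\<mu> ?A) \<le> S a (sugeno S M \<mu> f)"
  proof cases
    case 1
    then show ?thesis
      using semicopula_zero_left[OF S capacity_range[OF cap]] semicopula_comp_measurable I_pos
      by (simp add: level_set_measurable)
  next
    case 2
    then have empty: "?A = {}"
      using semicopula_le_left[OF S a f_range] by force
    show ?thesis
      unfolding empty using semicopula_zero_right[OF S s] cap I_pos by (simp add: capacity_def)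
  next
    case 3
    then obtain t where t: "t \<in> {0..1}" "S a t = s" "?A = {x \<in> space M. t \<le> f x}"
      by (rule level_set_semicopula_comp)
    let ?h = "\<mu> {x \<in> space M. t \<le> f x}"
    have h: "?h \<in> {0..1}"
      using capacity_range[OF cap level_set_measurable[OF f]] .
    have "S s (\<mu> ?A) = S a (S t ?h)"
      using t assoc a h by auto
    also have "\<dots> \<le> S a (sugeno S M \<mu> f)"
      using semicopula_range[OF S t(1) h] I sugeno_upper[OF S cap f t(1)]
      by (intro semicopula_mono_right[OF S a])
    finally show ?thesis .
  qed
qed

lemma sugeno_semicopula_comp_ge: "S a (sugeno S M \<mu> f) \<le> sugeno S M \<mu> (\<lambda>x. S a (f x))"
proof -
  let ?h = "\<lambda>t. \<mu> {x \<in> space M. t \<le> f x}"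
  have h: "?h t \<in> {0..1}" for t
    using capacity_range[OF cap level_set_measurable[OF f]] .
  have "S a (sugeno S M \<mu> f) = Sup (S a ` (\<lambda>t. S t (?h t)) ` {0..1})"
    unfolding sugeno_def using semicopula_range[OF S _ h]
    by (intro continuous_mono_on_Sup[OF cont semicopula_mono_on[OF S a]]) auto
  also have "\<dots> = (SUP t\<in>{0..1}. S a (S t (?h t)))"
    by (simp add: image_image)
  also have "\<dots> \<le> sugeno S M \<mu> (\<lambda>x. S a (f x))"
  proof (rule cSUP_least)
    fix t :: real
    assume t: "t \<in> {0..1}"
    have "S a (S t (?h t)) = S (S a t) (?h t)"
      using assoc a t h by auto
    also have "\<dots> \<le> sugeno S M \<mu> (\<lambda>x. S a (f x))"
    proof (cases "S a t = 0")
      case True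
      then show ?thesis
        using semicopula_zero_left[OF S h] sugeno_range[OF S cap semicopula_comp_measurable] by simp
    next
      case False
      then have "S a t \<in> {0<..a}"
        using semicopula_range[OF S a t] semicopula_le_left[OF S a t] by simp
      then obtain t1 where t1: "t1 \<in> {0..1}" "S a t1 = S a t"
        "{x \<in> space M. S a t \<le> S a (f x)} = {x \<in> space M. t1 \<le> f x}"
        "\<And>x. x \<in> {0..1} \<Longrightarrow> S a t \<le> S a x \<Longrightarrow> t1 \<le> x"
        using level_set_semicopula_comp by blast
      have "?h t \<le> ?h t1"
        using t1(4)[OF t] t
        by (intro capacity_mono[OF cap] level_set_measurable[OF f]) auto
      then have "S (S a t) (?h t) \<le> S (S a t) (?h t1)"
        using semicopula_range[OF S a t] h by (intro semicopula_mono_right[OF S])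
      also have "\<dots> \<le> sugeno S M \<mu> (\<lambda>x. S a (f x))"
        using sugeno_upper[OF S cap semicopula_comp_measurable semicopula_range[OF S a t]] t1(3) by simp
      finally show ?thesis .
    qed
    finally show "S a (S t (?h t)) \<le> sugeno S M \<mu> (\<lambda>x. S a (f x))" .
  qed simp
  finally show ?thesis .
qed

end

lemma associative_continuous_imp_homogeneous:
  assumes S: "semicopula S"
    and assoc: "\<forall>x\<in>{0..1}. \<forall>y\<in>{0..1}. \<forall>z\<in>{0..1}. S (S x y) z = S x (S y z)"
    and cont: "\<forall>a\<in>{0<..<1}. continuous_on {0..1} (S a)"
  shows "sugeno_homogeneous_on S (M :: 'a measure)"
  unfolding sugeno_homogeneous_on_def
proof (intro allI impI, elim conjE)
  fix \<mu> :: "'a set \<Rightarrow> real" and f :: "'a \<Rightarrow> real" and a :: real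
  assume "capacity M \<mu>" "f \<in> borel_measurable M" "\<forall>x\<in>space M. f x \<in> {0..1}" "a \<in> {0..1}"
  note hyps = S assoc semicopula_continuous_on[OF S cont \<open>a \<in> {0..1}\<close>] this(1,2) bspec[OF this(3)] this(4)
  show "sugeno S M \<mu> (\<lambda>x. S a (f x)) = S a (sugeno S M \<mu> f)"
    using sugeno_semicopula_comp_le[OF hyps] sugeno_semicopula_comp_ge[OF hyps] by (rule antisym)
qed

section \<open>Homogeneity implies associativity and continuity\<close>

definition filter_capacity :: "'a filter \<Rightarrow> 'a set \<Rightarrow> real" where
  "filter_capacity F A = (if eventually (\<lambda>x. x \<in> A) F then 1 else 0)"

text \<open>For \<open>[0,1]\<close>-valued \<open>f\<close> this is the lower limit of \<open>f\<close> along \<open>F\<close>, truncated below at \<open>0\<close>.\<close>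
definition liminf01 :: "'a filter \<Rightarrow> ('a \<Rightarrow> real) \<Rightarrow> real" where
  "liminf01 F f = Sup (insert 0 {t \<in> {0..1}. eventually (\<lambda>x. t \<le> f x) F})"

lemma capacity_filter_capacity:
  assumes "F \<noteq> bot" "eventually (\<lambda>x. x \<in> space M) F"
  shows "capacity M (filter_capacity F)"
proof -
  have "eventually (\<lambda>x. x \<in> B) F" if "A \<subseteq> B" "eventually (\<lambda>x. x \<in> A) F" for A B
    using that by (auto elim: eventually_mono)
  then show ?thesis
    using assms by (auto simp: capacity_def filter_capacity_def)
qed

lemma sugeno_filter_capacity:
  assumes S: "semicopula S" and F: "eventually (\<lambda>x. x \<in> space M) F"
  shows "sugeno S M (filter_capacity F) f = liminf01 F f"
proof -
  let ?P = "\<lambda>t. eventually (\<lambda>x. t \<le> f x) F"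
  have level: "S t (filter_capacity F {x \<in> space M. t \<le> f x}) = (if ?P t then t else 0)"
    if "t \<in> {0..1}" for t
  proof -
    have "eventually (\<lambda>x. x \<in> {x \<in> space M. t \<le> f x}) F \<longleftrightarrow> ?P t"
      using F by (auto intro: eventually_conj elim: eventually_mono)
    then show ?thesis
      using semicopula_one_right[OF S that] semicopula_zero_right[OF S that]
      by (simp add: filter_capacity_def)
  qed
  have "sugeno S M (filter_capacity F) f = Sup ((\<lambda>t. if ?P t then t else 0) ` {0..1})"
    unfolding sugeno_def by (rule arg_cong[where f=Sup], rule image_cong) (simp_all add: level)
  also have "(\<lambda>t. if ?P t then t else 0) ` {0..1} = insert 0 {t \<in> {0..1}. ?P t}"
  proof -
    have "0 \<in> (\<lambda>t. if ?P t then t else 0) ` {0..1}"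
      by (rule image_eqI[of _ _ 0]) auto
    moreover have "t \<in> (\<lambda>t. if ?P t then t else 0) ` {0..1}" if "t \<in> {0..1}" "?P t" for t
      using that by (intro image_eqI[of _ _ t]) auto
    ultimately show ?thesis
      by auto
  qed
  finally show ?thesis
    unfolding liminf01_def .
qed

lemma liminf01_le:
  assumes "F \<noteq> bot" "0 \<le> r" "eventually (\<lambda>x. f x \<le> r) F"
  shows "liminf01 F f \<le> r"
  unfolding liminf01_def
proof (rule cSup_least)
  fix t
  assume "t \<in> insert 0 {t \<in> {0..1}. eventually (\<lambda>x. t \<le> f x) F}"
  then show "t \<le> r"
  proof
    assume "t \<in> {t \<in> {0..1}. eventually (\<lambda>x. t \<le> f x) F}"
    then have "eventually (\<lambda>x. t \<le> f x) F"
      by simp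
    with assms(3) have "eventually (\<lambda>x. t \<le> r) F"
      by eventually_elim simp
    then show "t \<le> r"
      using assms(1) by (simp add: eventually_const_iff)
  qed (use assms(2) in simp)
qed simp

lemma liminf01_ge:
  assumes "r \<in> {0..1}" "eventually (\<lambda>x. r \<le> f x) F"
  shows "r \<le> liminf01 F f"
  unfolding liminf01_def using assms by (intro cSup_upper bdd_aboveI[where M=1]) auto

lemma eventually_ge_at_left_iff:
  fixes c t :: real
  shows "eventually (\<lambda>x. t \<le> x) (at_left c) \<longleftrightarrow> t < c"
proof
  assume "eventually (\<lambda>x. t \<le> x) (at_left c)"
  moreover have "eventually (\<lambda>x. x < c) (at_left c)"
    by (simp add: eventually_at_filter)
  ultimately have "eventually (\<lambda>x. t < c) (at_left c)"
    by eventually_elim simp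
  then show "t < c"
    by (simp add: eventually_const_iff)
next
  assume "t < c"
  then show "eventually (\<lambda>x. t \<le> x) (at_left c)"
    using eventually_at_left_real[of t c] by (auto elim: eventually_mono)
qed

lemma eventually_ge_at_right_iff:
  fixes c t :: real
  shows "eventually (\<lambda>x. t \<le> x) (at_right c) \<longleftrightarrow> t \<le> c"
proof
  assume ge: "eventually (\<lambda>x. t \<le> x) (at_right c)"
  show "t \<le> c"
  proof (rule ccontr)
    assume "\<not> t \<le> c"
    then have "eventually (\<lambda>x. x < t) (at_right c)"
      using eventually_at_right_real[of c t] by (auto elim: eventually_mono)
    with ge have "eventually (\<lambda>x. False) (at_right c)"
      by eventually_elim simp
    then show False
      by simp
  qed
next
  assume "t \<le> c"
  then show "eventually (\<lambda>x. t \<le> x) (at_right c)"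
    using eventually_at_right_less[of c] by (auto elim: eventually_mono)
qed

lemma liminf01_at_left_id:
  fixes c :: real
  assumes "0 < c" "c \<le> 1"
  shows "liminf01 (at_left c) (\<lambda>x. x) = c"
proof -
  have "insert 0 {t \<in> {0..1}. eventually (\<lambda>x. t \<le> x) (at_left c)} = {0..<c}"
    using assms by (auto simp: eventually_ge_at_left_iff)
  with assms show ?thesis
    by (simp add: liminf01_def)
qed

lemma liminf01_at_right_id:
  fixes c :: real
  assumes "0 \<le> c" "c < 1"
  shows "liminf01 (at_right c) (\<lambda>x. x) = c"
proof -
  have "insert 0 {t \<in> {0..1}. eventually (\<lambda>x. t \<le> x) (at_right c)} = {0..c}"
    using assms by (auto simp: eventually_ge_at_right_iff)
  with assms show ?thesis
    by (simp add: liminf01_def)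
qed

lemma homogeneous_imp_liminf01_comm:
  assumes S: "semicopula S" and hom: "sugeno_homogeneous_on S M"
    and F: "F \<noteq> bot" "eventually (\<lambda>x. x \<in> space M) F"
    and f: "f \<in> borel_measurable M" "\<forall>x\<in>space M. f x \<in> {0..1}" and a: "a \<in> {0..1}"
  shows "liminf01 F (\<lambda>x. S a (f x)) = S a (liminf01 F f)"
  using hom capacity_filter_capacity[OF F] f a
  unfolding sugeno_homogeneous_on_def sugeno_filter_capacity[OF S F(2), symmetric] by blast

lemma mono_on_threshold:
  fixes g :: "real \<Rightarrow> real"
  assumes mono: "mono_on {a..b} g" and "a \<le> b" "g a < r"
  obtains c where "c \<in> {a..b}" "\<forall>x\<in>{a..b}. x < c \<longrightarrow> g x < r"
    "\<forall>x\<in>{a..b}. c < x \<longrightarrow> r \<le> g x"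
proof
  let ?C = "{x \<in> {a..b}. g x < r}"
  have a: "a \<in> ?C"
    using assms by simp
  have bdd: "bdd_above ?C"
    by (auto intro: bdd_aboveI[where M=b])
  have ne: "?C \<noteq> {}"
    using a by blast
  have "Sup ?C \<le> b"
    by (rule cSup_least[OF ne]) simp
  then show "Sup ?C \<in> {a..b}"
    using cSup_upper[OF a bdd] by simp
  show "\<forall>x\<in>{a..b}. x < Sup ?C \<longrightarrow> g x < r"
  proof (intro ballI impI)
    fix x
    assume x: "x \<in> {a..b}" "x < Sup ?C"
    have "\<exists>y\<in>?C. x < y"
      using x(2) less_cSup_iff[OF ne bdd, of x] by (simp only:)
    then obtain y where "y \<in> {a..b}" "g y < r" "x < y"
      by blast
    then show "g x < r"
      using mono_onD[OF mono x(1), of y] by simp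
  qed
  show "\<forall>x\<in>{a..b}. Sup ?C < x \<longrightarrow> r \<le> g x"
  proof (intro ballI impI)
    fix x
    assume x: "x \<in> {a..b}" "Sup ?C < x"
    show "r \<le> g x"
    proof (rule ccontr)
      assume "\<not> r \<le> g x"
      then have "x \<le> Sup ?C"
        using x(1) by (intro cSup_upper[OF _ bdd]) simp
      with x(2) show False
        by simp
    qed
  qed
qed

lemma homogeneous_liminf01_comm_id:
  assumes S: "semicopula S" and hom: "sugeno_homogeneous_on S (count_space {0..1 :: real})"
    and a: "a \<in> {0..1}" and F: "F \<noteq> bot" "eventually (\<lambda>x. x \<in> {0..1}) F"
  shows "liminf01 F (S a) = S a (liminf01 F (\<lambda>x. x))"
proof -
  have "eventually (\<lambda>x. x \<in> space (count_space {0..1})) F"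
    using F(2) by simp
  from homogeneous_imp_liminf01_comm[OF S hom F(1) this, of "\<lambda>x. x"] a show ?thesis
    by simp
qed

text \<open>Homogeneity under the capacities concentrated just left and just right of \<open>c\<close>.\<close>

lemma homogeneous_left_bound:
  assumes S: "semicopula S" and hom: "sugeno_homogeneous_on S (count_space {0..1 :: real})"
    and a: "a \<in> {0..1}" and c: "0 < c" "c \<le> 1" and "0 \<le> r"
    and below: "\<And>x. x \<in> {0<..<c} \<Longrightarrow> S a x \<le> r"
  shows "S a c \<le> r"
proof -
  have "x \<in> {0..1} \<and> S a x \<le> r" if "x \<in> {0<..<c}" for x
    using below[OF that] that c(2) by simp
  then have "eventually (\<lambda>x. x \<in> {0..1}) (at_left c)" "eventually (\<lambda>x. S a x \<le> r) (at_left c)"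
    using eventually_at_left_real[OF c(1)] by (auto elim: eventually_mono)
  then have "S a c = liminf01 (at_left c) (S a)"
    using homogeneous_liminf01_comm_id[OF S hom a] liminf01_at_left_id[OF c] by simp
  also have "\<dots> \<le> r"
    using \<open>eventually (\<lambda>x. S a x \<le> r) (at_left c)\<close> \<open>0 \<le> r\<close> by (intro liminf01_le) auto
  finally show ?thesis .
qed

lemma homogeneous_right_bound:
  assumes S: "semicopula S" and hom: "sugeno_homogeneous_on S (count_space {0..1 :: real})"
    and a: "a \<in> {0..1}" and c: "0 \<le> c" "c < 1" and "r \<in> {0..1}"
    and above: "\<And>x. x \<in> {c<..<1} \<Longrightarrow> r \<le> S a x"
  shows "r \<le> S a c"
proof -
  have "x \<in> {0..1} \<and> r \<le> S a x" if "x \<in> {c<..<1}" for x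
    using above[OF that] that c(1) by simp
  then have "eventually (\<lambda>x. x \<in> {0..1}) (at_right c)" "eventually (\<lambda>x. r \<le> S a x) (at_right c)"
    using eventually_at_right_real[OF c(2)] by (auto elim: eventually_mono)
  then have "r \<le> liminf01 (at_right c) (S a)"
    using \<open>r \<in> {0..1}\<close> by (intro liminf01_ge)
  also have "\<dots> = S a c"
    using homogeneous_liminf01_comm_id[OF S hom a] liminf01_at_right_id[OF c]
      \<open>eventually (\<lambda>x. x \<in> {0..1}) (at_right c)\<close> by simp
  finally show ?thesis .
qed

text \<open>A value \<open>r\<close> skipped by \<open>S a\<close> would be jumped over at the threshold \<open>c\<close>, contradicting
  one of the two bounds.\<close>
lemma homogeneous_imp_surj:
  assumes S: "semicopula S" and hom: "sugeno_homogeneous_on S (count_space {0..1 :: real})"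
    and a: "a \<in> {0..1}" and r: "r \<in> {0..a}"
  shows "r \<in> S a ` {0..1}"
proof (cases "r = 0")
  case True
  then show ?thesis
    using semicopula_zero_right[OF S a] by (intro image_eqI[of _ _ 0]) auto
next
  case False
  then have "S a 0 < r"
    using r semicopula_zero_right[OF S a] by simp
  then obtain c where c: "c \<in> {0..1}" and below: "\<forall>x\<in>{0..1}. x < c \<longrightarrow> S a x < r"
    and above: "\<forall>x\<in>{0..1}. c < x \<longrightarrow> r \<le> S a x"
    by (rule mono_on_threshold[OF semicopula_mono_on[OF S a] zero_le_one])
  have "\<not> r < S a c"
  proof
    assume "r < S a c"
    then have "0 < c"
      using c \<open>S a 0 < r\<close> by (cases "c = 0") auto
    have "S a c \<le> r"
    proof (rule homogeneous_left_bound[OF S hom a \<open>0 < c\<close>])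
      fix x :: real
      assume x: "x \<in> {0<..<c}"
      then have "x \<in> {0..1}"
        using c by simp
      with bspec[OF below this] x show "S a x \<le> r"
        by simp
    qed (use c r in simp_all)
    with \<open>r < S a c\<close> show False
      by simp
  qed
  moreover have "\<not> S a c < r"
  proof
    assume "S a c < r"
    then have "c < 1"
      using c r semicopula_one_right[OF S a] by (cases "c = 1") auto
    have "r \<le> S a c"
    proof (rule homogeneous_right_bound[OF S hom a _ \<open>c < 1\<close>])
      fix x :: real
      assume x: "x \<in> {c<..<1}"
      then have "x \<in> {0..1}"
        using c by simp
      with bspec[OF above this] x show "r \<le> S a x"
        by simp
    qed (use c r a in simp_all)
    with \<open>S a c < r\<close> show False
      by simp
  qed
  ultimately have "r = S a c"
    by linarith
  then show ?thesis
    using c by (rule image_eqI)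
qed

lemma homogeneous_imp_continuous_on:
  assumes S: "semicopula S" and hom: "sugeno_homogeneous_on S (count_space {0..1 :: real})"
    and a: "a \<in> {0..1}"
  shows "continuous_on {0..1} (S a)"
proof (rule mono_on_onto_imp_continuous_on)
  show "{S a 0..S a 1} \<subseteq> S a ` {0..1}"
  proof
    fix r
    assume "r \<in> {S a 0..S a 1}"
    then have "r \<in> {0..a}"
      using semicopula_zero_right[OF S a] semicopula_one_right[OF S a] by simp
    then show "r \<in> S a ` {0..1}"
      by (rule homogeneous_imp_surj[OF S hom a])
  qed
qed (simp_all add: semicopula_mono_on[OF S a])

lemma sugeno_point_capacity:
  assumes S: "semicopula S" and "q \<noteq> p" and d: "d \<in> {0..1}" and b: "b \<in> {0..1}"
  shows "sugeno S (count_space UNIV) (\<lambda>A. if A = UNIV then 1 else if p \<in> A then b else 0)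
           (\<lambda>x. if x = p then d else 0) = S d b"
proof -
  let ?\<mu> = "\<lambda>A. if A = UNIV then 1 else if p \<in> A then b else 0"
  let ?f = "\<lambda>x. if x = p then d else 0"
  have "{p} \<noteq> UNIV"
    using \<open>q \<noteq> p\<close> by auto
  then have level: "?\<mu> {x \<in> space (count_space UNIV). t \<le> ?f x} =
      (if t \<le> 0 then 1 else if t \<le> d then b else 0)" for t
    using d by (cases "t \<le> 0"; cases "t \<le> d") auto
  have cap: "capacity (count_space UNIV) ?\<mu>"
    using b by (auto simp: capacity_def)
  show ?thesis
  proof (rule antisym)
    show "sugeno S (count_space UNIV) ?\<mu> ?f \<le> S d b"
    proof (rule sugeno_least)
      fix t :: real
      assume t: "t \<in> {0..1}"
      show "S t (?\<mu> {x \<in> space (count_space UNIV). t \<le> ?f x}) \<le> S d b"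
        unfolding level
        using semicopula_range[OF S d b] semicopula_one_right[OF S t]
          semicopula_mono_left[OF S t d b] semicopula_zero_right[OF S t] t
        by (cases "t \<le> 0"; cases "t \<le> d") auto
    qed
    show "S d b \<le> sugeno S (count_space UNIV) ?\<mu> ?f"
    proof (cases "d = 0")
      case True
      then show ?thesis
        using semicopula_zero_left[OF S b] sugeno_range[OF S cap, of ?f] by simp
    next
      case False
      then show ?thesis
        using sugeno_upper[OF S cap _ d, of ?f] level[of d] d by simp
    qed
  qed
qed

lemma homogeneous_imp_associative:
  assumes S: "semicopula S" and hom: "sugeno_homogeneous_on S (count_space (UNIV :: real set))"
    and x: "x \<in> {0..1}" and y: "y \<in> {0..1}" and z: "z \<in> {0..1}"
  shows "S (S x y) z = S x (S y z)"
proof -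
  let ?\<mu> = "\<lambda>A. if A = UNIV then 1 else if (1::real) \<in> A then z else 0"
  have cap: "capacity (count_space UNIV) ?\<mu>"
    using z by (auto simp: capacity_def)
  have "S (S x y) z = sugeno S (count_space UNIV) ?\<mu> (\<lambda>w. if w = 1 then S x y else 0)"
    by (rule sugeno_point_capacity[OF S zero_neq_one[where 'a=real] semicopula_range[OF S x y] z, symmetric])
  also have "(\<lambda>w. if w = 1 then S x y else 0) = (\<lambda>w. S x (if w = 1 then y else 0))"
    using semicopula_zero_right[OF S x] by auto
  also have "sugeno S (count_space UNIV) ?\<mu> \<dots>
      = S x (sugeno S (count_space UNIV) ?\<mu> (\<lambda>w. if w = 1 then y else 0))"
    by (rule hom[unfolded sugeno_homogeneous_on_def, rule_format]) (use cap x y in auto)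
  also have "\<dots> = S x (S y z)"
    using sugeno_point_capacity[OF S zero_neq_one[where 'a=real] y z] by simp
  finally show ?thesis .
qed

theorem theorem2:
  fixes S :: "real \<Rightarrow> real \<Rightarrow> real"
    and T :: "'a itself"
  assumes "semicopula S"
    and "\<forall>a\<in>{0<..<1}. piecewise_const_or_strict (S a)"
  shows "((\<forall>M :: real measure. sugeno_homogeneous_on S M) \<longleftrightarrow>
            ((\<forall>x\<in>{0..1}. \<forall>y\<in>{0..1}. \<forall>z\<in>{0..1}. S (S x y) z = S x (S y z)) \<and>
             (\<forall>a\<in>{0<..<1}. continuous_on {0..1} (S a))))
       \<and> (((\<forall>x\<in>{0..1}. \<forall>y\<in>{0..1}. \<forall>z\<in>{0..1}. S (S x y) z = S x (S y z)) \<and>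
             (\<forall>a\<in>{0<..<1}. continuous_on {0..1} (S a)))
          \<longrightarrow> (\<forall>M :: 'a measure. sugeno_homogeneous_on S M))"
proof (intro conjI impI iffI allI)
  assume hom: "\<forall>M :: real measure. sugeno_homogeneous_on S M"
  show "\<forall>x\<in>{0..1}. \<forall>y\<in>{0..1}. \<forall>z\<in>{0..1}. S (S x y) z = S x (S y z)"
    using homogeneous_imp_associative[OF assms(1) hom[rule_format]] by blast
  show "\<forall>a\<in>{0<..<1}. continuous_on {0..1} (S a)"
    using homogeneous_imp_continuous_on[OF assms(1) hom[rule_format]] by simp
qed (use associative_continuous_imp_homogeneous[OF assms(1)] in blast)+

end
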